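(* Let $M$ be a magma satisfying $(xy)z = x(yz)$ and $x(yx) = x$ for all $x,y,z\in M$. Then $M$ satisfies $xy = x$ for all $x,y\in M$ if and only if $M$ avoids the $2$-element right zero band $2_{RZ}$ on $\{0,1\}$ with Cayley table \[ \begin{array}{c|cc} 2_{RZ} & 0 & 1 \\ \hline 0 & 0 & 1 \\ 1 & 0 & 1 \end{array}. \]
   Context: A magma is a nonempty set with a binary operation, written by juxtaposition. A magma $M$ avoids a magma $F$ if no submagma of $M$ is isomorphic to $F$. *)

theory Defs
  imports Main
begin

definition magma :: "'a set \<Rightarrow> ('a \<Rightarrow> 'a \<Rightarrow> 'a) \<Rightarrow> bool" where
  "magma M op \<longleftrightarrow> M \<noteq> {} \<and> (\<forall>x\<in>M. \<forall>y\<in>M. op x y \<in> M)"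

definition submagma :: "'a set \<Rightarrow> 'a set \<Rightarrow> ('a \<Rightarrow> 'a \<Rightarrow> 'a) \<Rightarrow> bool" where
  "submagma S M op \<longleftrightarrow> S \<subseteq> M \<and> magma S op"

definition magma_iso ::
  "'a set \<Rightarrow> ('a \<Rightarrow> 'a \<Rightarrow> 'a) \<Rightarrow> 'b set \<Rightarrow> ('b \<Rightarrow> 'b \<Rightarrow> 'b) \<Rightarrow> bool" where
  "magma_iso A opA B opB \<longleftrightarrow>
     (\<exists>h. bij_betw h A B \<and> (\<forall>x\<in>A. \<forall>y\<in>A. h (opA x y) = opB (h x) (h y)))"

definition avoids ::
  "'a set \<Rightarrow> ('a \<Rightarrow> 'a \<Rightarrow> 'a) \<Rightarrow> 'b set \<Rightarrow> ('b \<Rightarrow> 'b \<Rightarrow> 'b) \<Rightarrow> bool" where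
  "avoids M op F opF \<longleftrightarrow> \<not> (\<exists>S. submagma S M op \<and> magma_iso F opF S op)"

definition rz2_carrier :: "nat set" where "rz2_carrier = {0, 1}"
definition rz2_op :: "nat \<Rightarrow> nat \<Rightarrow> nat" where "rz2_op x y = y"

end

theory Submission
  imports Defs
begin

text \<open>Associativity and \<open>x(yx) = x\<close> make \<open>M\<close> a rectangular band; in particular
  \<open>xx = x\<close>. For any \<open>x, y\<close> the pair \<open>{x, xy}\<close> is then a right zero subband, so \<open>M\<close>
  avoids \<open>2\<^sub>R\<^sub>Z\<close> exactly when every such pair collapses, i.e. when \<open>xy = x\<close>.\<close>

definition right_zero_on :: "('a \<Rightarrow> 'a \<Rightarrow> 'a) \<Rightarrow> 'a set \<Rightarrow> bool" where
  "right_zero_on op S \<longleftrightarrow> (\<forall>u\<in>S. \<forall>w\<in>S. op u w = w)"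

lemma avoids_rz2_iff:
  "avoids M op rz2_carrier rz2_op \<longleftrightarrow>
     (\<forall>a\<in>M. \<forall>b\<in>M. right_zero_on op {a, b} \<longrightarrow> a = b)"
proof
  assume avoid: "avoids M op rz2_carrier rz2_op"
  show "\<forall>a\<in>M. \<forall>b\<in>M. right_zero_on op {a, b} \<longrightarrow> a = b"
  proof (intro ballI impI)
    fix a b
    assume ab: "a \<in> M" "b \<in> M" "right_zero_on op {a, b}"
    show "a = b"
    proof (rule ccontr)
      assume "a \<noteq> b"
      define h where "h = (\<lambda>n::nat. if n = 0 then a else b)"
      have "submagma {a, b} M op"
        using ab unfolding submagma_def magma_def right_zero_on_def by auto
      moreover have "magma_iso rz2_carrier rz2_op {a, b} op"
        unfolding magma_iso_def
      proof (intro exI conjI)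
        show "bij_betw h rz2_carrier {a, b}"
          using \<open>a \<noteq> b\<close> unfolding bij_betw_def inj_on_def rz2_carrier_def h_def by auto
        show "\<forall>m\<in>rz2_carrier. \<forall>n\<in>rz2_carrier. h (rz2_op m n) = op (h m) (h n)"
          using ab(3) unfolding right_zero_on_def rz2_carrier_def rz2_op_def h_def by auto
      qed
      ultimately show False
        using avoid unfolding avoids_def by blast
    qed
  qed
next
  assume collapse: "\<forall>a\<in>M. \<forall>b\<in>M. right_zero_on op {a, b} \<longrightarrow> a = b"
  show "avoids M op rz2_carrier rz2_op"
    unfolding avoids_def
  proof
    assume "\<exists>S. submagma S M op \<and> magma_iso rz2_carrier rz2_op S op"
    then obtain S h where "S \<subseteq> M" and bij: "bij_betw h rz2_carrier S"
      and hom: "\<forall>m\<in>rz2_carrier. \<forall>n\<in>rz2_carrier. h (rz2_op m n) = op (h m) (h n)"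
      unfolding submagma_def magma_iso_def by blast
    then have "h 0 \<in> M" "h 1 \<in> M"
      unfolding bij_betw_def rz2_carrier_def by auto
    moreover have "right_zero_on op {h 0, h 1}"
      using hom unfolding right_zero_on_def rz2_carrier_def rz2_op_def by auto
    ultimately have "h 0 = h 1"
      using collapse by blast
    moreover have "inj_on h {0, 1::nat}"
      using bij unfolding bij_betw_def rz2_carrier_def by simp
    ultimately show False
      by (auto dest: inj_onD)
  qed
qed

lemma rectangular_band_idem:
  assumes closed: "\<forall>x\<in>M. \<forall>y\<in>M. op x y \<in> M"
    and assoc: "\<forall>x\<in>M. \<forall>y\<in>M. \<forall>z\<in>M. op (op x y) z = op x (op y z)"
    and absorb: "\<forall>x\<in>M. \<forall>y\<in>M. op x (op y x) = x"
    and x: "x \<in> M"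
  shows "op x x = x"
proof -
  have "op x x = op (op x (op x x)) x"
    using absorb x by simp
  also have "\<dots> = op x (op (op x x) x)"
    using assoc closed x by simp
  also have "\<dots> = x"
    using absorb closed x by simp
  finally show ?thesis .
qed

lemma rectangular_band_right_zero_on_pair:
  assumes closed: "\<forall>x\<in>M. \<forall>y\<in>M. op x y \<in> M"
    and assoc: "\<forall>x\<in>M. \<forall>y\<in>M. \<forall>z\<in>M. op (op x y) z = op x (op y z)"
    and absorb: "\<forall>x\<in>M. \<forall>y\<in>M. op x (op y x) = x"
    and x: "x \<in> M" and y: "y \<in> M"
  shows "right_zero_on op {x, op x y}"
proof -
  have idem: "op a a = a" if "a \<in> M" for a
    using rectangular_band_idem[OF closed assoc absorb that] .
  have "op x (op x y) = op (op x x) y"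
    using assoc x y by simp
  then have "op x (op x y) = op x y"
    using idem x by simp
  moreover have "op (op x y) x = x"
    using assoc absorb x y by simp
  moreover have "op x x = x" "op (op x y) (op x y) = op x y"
    using idem closed x y by auto
  ultimately show ?thesis
    unfolding right_zero_on_def by auto
qed

lemma rectangular_band_left_zero_iff:
  assumes closed: "\<forall>x\<in>M. \<forall>y\<in>M. op x y \<in> M"
    and assoc: "\<forall>x\<in>M. \<forall>y\<in>M. \<forall>z\<in>M. op (op x y) z = op x (op y z)"
    and absorb: "\<forall>x\<in>M. \<forall>y\<in>M. op x (op y x) = x"
  shows "(\<forall>x\<in>M. \<forall>y\<in>M. op x y = x) \<longleftrightarrow>
         (\<forall>a\<in>M. \<forall>b\<in>M. right_zero_on op {a, b} \<longrightarrow> a = b)"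
proof
  assume left_zero: "\<forall>x\<in>M. \<forall>y\<in>M. op x y = x"
  show "\<forall>a\<in>M. \<forall>b\<in>M. right_zero_on op {a, b} \<longrightarrow> a = b"
  proof (intro ballI impI)
    fix a b
    assume "a \<in> M" "b \<in> M" "right_zero_on op {a, b}"
    then have "op b a = a" "op b a = b"
      using left_zero unfolding right_zero_on_def by blast+
    then show "a = b"
      by simp
  qed
next
  assume collapse: "\<forall>a\<in>M. \<forall>b\<in>M. right_zero_on op {a, b} \<longrightarrow> a = b"
  show "\<forall>x\<in>M. \<forall>y\<in>M. op x y = x"
  proof (intro ballI)
    fix x y
    assume xy: "x \<in> M" "y \<in> M"
    then have "right_zero_on op {x, op x y}"
      by (rule rectangular_band_right_zero_on_pair[OF closed assoc absorb])
    with collapse closed xy have "x = op x y"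
      by blast
    then show "op x y = x" ..
  qed
qed

theorem mainTheorem6:
  fixes M :: "'a set" and op :: "'a \<Rightarrow> 'a \<Rightarrow> 'a"
  assumes "magma M op"
    and "\<forall>x\<in>M. \<forall>y\<in>M. \<forall>z\<in>M. op (op x y) z = op x (op y z)"
    and "\<forall>x\<in>M. \<forall>y\<in>M. op x (op y x) = x"
  shows "(\<forall>x\<in>M. \<forall>y\<in>M. op x y = x) \<longleftrightarrow> avoids M op rz2_carrier rz2_op"
proof -
  have closed: "\<forall>x\<in>M. \<forall>y\<in>M. op x y \<in> M"
    using assms(1) unfolding magma_def by blast
  show ?thesis
    unfolding avoids_rz2_iff
    using rectangular_band_left_zero_iff[OF closed assms(2,3)] .
qed

end
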